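(* Let $4\le q<\omega$ and let $\mathbf{A}$ be a Monk algebra obtained from $\mathbf{E}^{23}_q$ by splitting. Let $\mathbf{E}$ be any subalgebra of $\mathbf{E}^{23}_q$. Then $\mathbf{A}$ is a special extension of $\mathbf{E}$, i.e., for all diversity atoms $a,b,c$ of $\mathbf{E}$: (1) if not $a=b=c$ and $a;b\ge c$, then $x;y\ge c$ whenever $x,y$ are atoms of $\mathbf{A}$ with $x\le a$ and $y\le b$; and (2) if $a;a\ge a$, then $x;y\cdot a\ne 0$ whenever $x,y$ are atoms of $\mathbf{A}$ with $x,y\le a$.
   Context: Relation algebras are in the sense of Tarski; $1'$ identity, $0'$ its complement, $;$ relative product, $x^{\smile}$ converse, $\overline{x}$ Boolean complement; integral: $1'$ is an atom; symmetric: $x^{\smile}=x$ for all $x$; a diversity atom is an atom below $0'$. For $4\le q<\omega$, $\mathbf{E}^{23}_q$ is the finite symmetric integral relation algebra with $q$ atoms $e_0=1',e_1,\dots,e_{q-1}$ such that $a;b=0'$ for distinct diversity atoms $a,b$ and $a;a=\overline{a}$ for every diversity atom $a$. For atomic relation algebras $\mathbf{A},\mathbf{B}$, $\mathbf{A}$ is obtained from $\mathbf{B}$ by splitting if $\mathbf{B}\subseteq\mathbf{A}$, every atom $x$ of $\mathbf{A}$ is below an atom $c(x)$ of $\mathbf{B}$, and for all atoms $x,y\le0'$ of $\mathbf{A}$: $x;y=c(x);c(y)\cdot0'$ if $x\ne y^{\smile}$, and $x;y=c(x);c(y)$ if $x=y^{\smile}$. A Monk algebra is an atomic symmetric integral relation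 algebra obtained by splitting from some $\mathbf{E}^{23}_q$, $4\le q<\omega$. *)

theory Defs
  imports Main
begin

(* An (abstract) algebra of relation-algebra signature over an ambient type 'a:
   carrier, Boolean join, Boolean complement, relative product, converse, identity 1'. *)
record 'a ra =
  car :: "'a set"
  pl  :: "'a \<Rightarrow> 'a \<Rightarrow> 'a"
  neg :: "'a \<Rightarrow> 'a"
  cmp :: "'a \<Rightarrow> 'a \<Rightarrow> 'a"
  cnv :: "'a \<Rightarrow> 'a"
  idt :: "'a"

definition mt :: "('a, 'b) ra_scheme \<Rightarrow> 'a \<Rightarrow> 'a \<Rightarrow> 'a" where
  "mt R x y = neg R (pl R (neg R x) (neg R y))"

definition leq :: "('a, 'b) ra_scheme \<Rightarrow> 'a \<Rightarrow> 'a \<Rightarrow> bool" where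
  "leq R x y \<longleftrightarrow> pl R x y = y"

definition zero :: "('a, 'b) ra_scheme \<Rightarrow> 'a" where
  "zero R = mt R (idt R) (neg R (idt R))"

definition dvs :: "('a, 'b) ra_scheme \<Rightarrow> 'a" where
  "dvs R = neg R (idt R)"

(* Tarski's axioms (Huntington's axioms for the Boolean part, plus R4--R10) *)
definition is_RA :: "('a, 'b) ra_scheme \<Rightarrow> bool" where
  "is_RA R \<longleftrightarrow>
     idt R \<in> car R \<and>
     (\<forall>x\<in>car R. \<forall>y\<in>car R. pl R x y \<in> car R \<and> cmp R x y \<in> car R) \<and>
     (\<forall>x\<in>car R. neg R x \<in> car R \<and> cnv R x \<in> car R) \<and>
     (\<forall>x\<in>car R. \<forall>y\<in>car R. pl R x y = pl R y x) \<and>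
     (\<forall>x\<in>car R. \<forall>y\<in>car R. \<forall>z\<in>car R. pl R (pl R x y) z = pl R x (pl R y z)) \<and>
     (\<forall>x\<in>car R. \<forall>y\<in>car R.
        pl R (neg R (pl R (neg R x) y)) (neg R (pl R (neg R x) (neg R y))) = x) \<and>
     (\<forall>x\<in>car R. \<forall>y\<in>car R. \<forall>z\<in>car R. cmp R (cmp R x y) z = cmp R x (cmp R y z)) \<and>
     (\<forall>x\<in>car R. \<forall>y\<in>car R. \<forall>z\<in>car R. cmp R (pl R x y) z = pl R (cmp R x z) (cmp R y z)) \<and>
     (\<forall>x\<in>car R. cmp R x (idt R) = x) \<and>
     (\<forall>x\<in>car R. cnv R (cnv R x) = x) \<and>
     (\<forall>x\<in>car R. \<forall>y\<in>car R. cnv R (pl R x y) = pl R (cnv R x) (cnv R y)) \<and>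
     (\<forall>x\<in>car R. \<forall>y\<in>car R. cnv R (cmp R x y) = cmp R (cnv R y) (cnv R x)) \<and>
     (\<forall>x\<in>car R. \<forall>y\<in>car R.
        pl R (cmp R (cnv R x) (neg R (cmp R x y))) (neg R y) = neg R y)"

definition atom :: "('a, 'b) ra_scheme \<Rightarrow> 'a \<Rightarrow> bool" where
  "atom R x \<longleftrightarrow> x \<in> car R \<and> x \<noteq> zero R \<and>
     (\<forall>y\<in>car R. leq R y x \<longrightarrow> y = zero R \<or> y = x)"

definition atomic :: "('a, 'b) ra_scheme \<Rightarrow> bool" where
  "atomic R \<longleftrightarrow> (\<forall>x\<in>car R. x \<noteq> zero R \<longrightarrow> (\<exists>a. atom R a \<and> leq R a x))"

definition integral :: "('a, 'b) ra_scheme \<Rightarrow> bool" where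
  "integral R \<longleftrightarrow> atom R (idt R)"

definition symmetric :: "('a, 'b) ra_scheme \<Rightarrow> bool" where
  "symmetric R \<longleftrightarrow> (\<forall>x\<in>car R. cnv R x = x)"

definition subalg :: "('a, 'b) ra_scheme \<Rightarrow> ('a, 'c) ra_scheme \<Rightarrow> bool" where
  "subalg E A \<longleftrightarrow> is_RA E \<and> is_RA A \<and> car E \<subseteq> car A \<and> idt E = idt A \<and>
     (\<forall>x\<in>car E. \<forall>y\<in>car E. pl E x y = pl A x y \<and> cmp E x y = cmp A x y) \<and>
     (\<forall>x\<in>car E. neg E x = neg A x \<and> cnv E x = cnv A x)"

definition splitting :: "('a, 'b) ra_scheme \<Rightarrow> ('a, 'c) ra_scheme \<Rightarrow> bool" where
  "splitting A B \<longleftrightarrow> atomic A \<and> atomic B \<and> subalg B A \<and>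
     (\<forall>x. atom A x \<longrightarrow> (\<exists>c. atom B c \<and> leq A x c)) \<and>
     (\<forall>x y cx cy. atom A x \<and> atom A y \<and> leq A x (dvs A) \<and> leq A y (dvs A) \<and>
        atom B cx \<and> atom B cy \<and> leq A x cx \<and> leq A y cy \<longrightarrow>
        cmp A x y = (if x \<noteq> cnv A y then mt A (cmp A cx cy) (dvs A) else cmp A cx cy))"

definition is_E23 :: "nat \<Rightarrow> ('a, 'b) ra_scheme \<Rightarrow> bool" where
  "is_E23 q B \<longleftrightarrow> is_RA B \<and> finite (car B) \<and> symmetric B \<and> integral B \<and>
     card {a. atom B a} = q \<and>
     (\<forall>a b. atom B a \<and> atom B b \<and> leq B a (dvs B) \<and> leq B b (dvs B) \<longrightarrow>
        (a \<noteq> b \<longrightarrow> cmp B a b = dvs B) \<and> cmp B a a = neg B a)"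

end

theory Submission imports Defs begin

text \<open>Every atom x of A lies below an atom d of \<open>E\<^sup>2\<^sup>3\<^sub>q\<close>, and d lies below the
  subalgebra atom a containing x. By the splitting rule, x;y is 0' when the atoms covering x
  and y differ (distinct diversity atoms of \<open>E\<^sup>2\<^sup>3\<^sub>q\<close> compose to 0'), and contains
  \<open>-d\<cdot>0'\<close> when both lie below d (as d;d = -d). So x;y contains every diversity atom c except
  possibly one above d; but a subalgebra atom above d equals a and b, which is excluded in (1).
  In (2), \<open>-d\<cdot>a = 0\<close> forces a = d, and then a;a = -a cannot contain a.\<close>

locale relation_algebra =
  fixes R :: "('a, 'b) ra_scheme"
  assumes is_RA: "is_RA R"
begin

lemma idt_closed [simp]: "idt R \<in> car R"
  using is_RA unfolding is_RA_def by (elim conjE) blast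

lemma pl_closed [simp]: "x \<in> car R \<Longrightarrow> y \<in> car R \<Longrightarrow> pl R x y \<in> car R"
  using is_RA unfolding is_RA_def by (elim conjE) blast

lemma cmp_closed [simp]: "x \<in> car R \<Longrightarrow> y \<in> car R \<Longrightarrow> cmp R x y \<in> car R"
  using is_RA unfolding is_RA_def by (elim conjE) blast

lemma neg_closed [simp]: "x \<in> car R \<Longrightarrow> neg R x \<in> car R"
  using is_RA unfolding is_RA_def by (elim conjE) blast

lemma pl_comm: "x \<in> car R \<Longrightarrow> y \<in> car R \<Longrightarrow> pl R x y = pl R y x"
  using is_RA unfolding is_RA_def by (elim conjE) blast

lemma pl_assoc:
  "x \<in> car R \<Longrightarrow> y \<in> car R \<Longrightarrow> z \<in> car R \<Longrightarrow> pl R (pl R x y) z = pl R x (pl R y z)"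
  using is_RA unfolding is_RA_def by (elim conjE) blast

lemma huntington:
  "x \<in> car R \<Longrightarrow> y \<in> car R \<Longrightarrow>
    pl R (neg R (pl R (neg R x) y)) (neg R (pl R (neg R x) (neg R y))) = x"
  using is_RA unfolding is_RA_def by (elim conjE) blast

lemma pl_neg_eq_pl_neg_neg: "x \<in> car R \<Longrightarrow> pl R x (neg R x) = pl R (neg R x) (neg R (neg R x))"
  by (smt (verit, ccfv_threshold) huntington pl_assoc neg_closed pl_comm pl_closed)

lemma neg_neg: "x \<in> car R \<Longrightarrow> neg R (neg R x) = x"
  by (metis huntington pl_neg_eq_pl_neg_neg neg_closed pl_comm pl_closed)

lemma pl_neg_indep: "x \<in> car R \<Longrightarrow> y \<in> car R \<Longrightarrow> pl R x (neg R x) = pl R y (neg R y)"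
  by (smt (verit) huntington neg_neg pl_assoc neg_closed pl_comm pl_closed)

lemma pl_idem: "x \<in> car R \<Longrightarrow> pl R x x = x"
  by (smt (verit) huntington neg_neg pl_neg_indep pl_assoc neg_closed pl_closed)

lemma pl_top: "x \<in> car R \<Longrightarrow> y \<in> car R \<Longrightarrow> pl R x (pl R y (neg R y)) = pl R y (neg R y)"
  by (metis pl_neg_indep pl_idem pl_assoc neg_closed)

lemma pl_bot: "x \<in> car R \<Longrightarrow> y \<in> car R \<Longrightarrow> pl R x (neg R (pl R y (neg R y))) = x"
  by (smt (verit) huntington neg_neg pl_neg_indep pl_idem pl_top pl_assoc neg_closed pl_comm
      pl_closed)

lemma mt_closed [simp]: "x \<in> car R \<Longrightarrow> y \<in> car R \<Longrightarrow> mt R x y \<in> car R"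
  by (simp add: mt_def)

lemma dvs_closed [simp]: "dvs R \<in> car R"
  by (simp add: dvs_def)

lemma mt_comm: "x \<in> car R \<Longrightarrow> y \<in> car R \<Longrightarrow> mt R x y = mt R y x"
  by (simp add: mt_def pl_comm)

lemma mt_assoc:
  "x \<in> car R \<Longrightarrow> y \<in> car R \<Longrightarrow> z \<in> car R \<Longrightarrow> mt R (mt R x y) z = mt R x (mt R y z)"
  by (simp add: mt_def neg_neg pl_assoc)

lemma mt_idem: "x \<in> car R \<Longrightarrow> mt R x x = x"
  by (simp add: mt_def neg_neg pl_idem)

lemma pl_mt_absorb: "x \<in> car R \<Longrightarrow> y \<in> car R \<Longrightarrow> pl R x (mt R x y) = x"
  unfolding mt_def by (smt (verit) huntington pl_idem pl_assoc neg_closed pl_closed)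

lemma leq_iff_mt: "x \<in> car R \<Longrightarrow> y \<in> car R \<Longrightarrow> leq R x y \<longleftrightarrow> mt R x y = x"
proof
  assume "x \<in> car R" "y \<in> car R" "leq R x y"
  then show "mt R x y = x" unfolding mt_def leq_def
    by (smt (verit) huntington neg_neg pl_top pl_bot pl_assoc neg_closed pl_closed pl_comm)
next
  assume "x \<in> car R" "y \<in> car R" "mt R x y = x"
  then show "leq R x y" unfolding leq_def by (metis pl_mt_absorb pl_comm mt_comm mt_closed)
qed

lemma leq_refl: "x \<in> car R \<Longrightarrow> leq R x x"
  unfolding leq_def by (rule pl_idem)

lemma mt_lower1: "x \<in> car R \<Longrightarrow> y \<in> car R \<Longrightarrow> leq R (mt R x y) x"
  unfolding leq_def by (metis pl_mt_absorb pl_comm mt_closed)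

lemma mt_greatest:
  "x \<in> car R \<Longrightarrow> y \<in> car R \<Longrightarrow> z \<in> car R \<Longrightarrow> leq R z x \<Longrightarrow> leq R z y \<Longrightarrow> leq R z (mt R x y)"
  by (metis leq_iff_mt mt_assoc mt_closed)

lemma leq_trans:
  "x \<in> car R \<Longrightarrow> y \<in> car R \<Longrightarrow> z \<in> car R \<Longrightarrow> leq R x y \<Longrightarrow> leq R y z \<Longrightarrow> leq R x z"
  unfolding leq_def by (metis pl_assoc)

lemma leq_antisym: "x \<in> car R \<Longrightarrow> y \<in> car R \<Longrightarrow> leq R x y \<Longrightarrow> leq R y x \<Longrightarrow> x = y"
  unfolding leq_def by (metis pl_comm)

lemma mt_lower2: "x \<in> car R \<Longrightarrow> y \<in> car R \<Longrightarrow> leq R (mt R x y) y"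
  using mt_lower1 mt_comm by metis

lemma mt_mono_left:
  assumes x: "x \<in> car R" and y: "y \<in> car R" and z: "z \<in> car R" and xy: "leq R x y"
  shows "leq R (mt R x z) (mt R y z)"
proof -
  have "leq R (mt R x z) y" using leq_trans[OF _ x y mt_lower1[OF x z] xy] x z by simp
  then show ?thesis using mt_greatest mt_lower2 x y z by simp
qed

lemma zero_eq: "y \<in> car R \<Longrightarrow> zero R = neg R (pl R y (neg R y))"
  unfolding zero_def mt_def by (metis neg_neg pl_neg_indep idt_closed neg_closed pl_comm)

lemma mt_neg_zero: "x \<in> car R \<Longrightarrow> mt R x (neg R x) = zero R"
  by (metis neg_neg zero_eq mt_def neg_closed pl_comm)

lemma leq_zero_eq: "x \<in> car R \<Longrightarrow> leq R x (zero R) \<Longrightarrow> x = zero R"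
  unfolding leq_def by (metis pl_bot zero_eq)

lemma leq_neg_if_mt_zero: "x \<in> car R \<Longrightarrow> y \<in> car R \<Longrightarrow> mt R y x = zero R \<Longrightarrow> leq R x (neg R y)"
proof -
  assume xy: "x \<in> car R" "y \<in> car R" "mt R y x = zero R"
  then have "mt R x y = neg R (pl R x (neg R x))"
    using mt_comm zero_eq by metis
  then have "mt R x (neg R y) = x"
    using huntington[of x "neg R y"] xy unfolding mt_def by (metis neg_neg pl_bot neg_closed pl_closed pl_comm)
  with xy show ?thesis by (simp add: leq_iff_mt)
qed

lemma leq_neg_self_eq_zero: "x \<in> car R \<Longrightarrow> leq R x (neg R x) \<Longrightarrow> x = zero R"
  by (metis leq_iff_mt mt_neg_zero neg_closed)

lemma atom_mt_cases: "atom R d \<Longrightarrow> u \<in> car R \<Longrightarrow> mt R d u = zero R \<or> mt R d u = d"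
  unfolding atom_def using mt_lower1 by simp

lemma atom_leq_or_leq_neg:
  assumes "atom R d" and "u \<in> car R"
  shows "leq R d u \<or> leq R u (neg R d)"
  using atom_mt_cases[OF assms] assms leq_iff_mt leq_neg_if_mt_zero
  unfolding atom_def by blast

end

lemma atom_car: "atom R x \<Longrightarrow> x \<in> car R"
  unfolding atom_def by simp

lemma atom_nonzero: "atom R x \<Longrightarrow> x \<noteq> zero R"
  unfolding atom_def by simp

lemma subalg_car: "subalg S R \<Longrightarrow> x \<in> car S \<Longrightarrow> x \<in> car R"
  unfolding subalg_def by (elim conjE) blast

lemma subalg_relation_algebras: "subalg S R \<Longrightarrow> relation_algebra S \<and> relation_algebra R"
  unfolding subalg_def relation_algebra_def by simp

lemma subalg_cmp: "subalg S R \<Longrightarrow> x \<in> car S \<Longrightarrow> y \<in> car S \<Longrightarrow> cmp S x y = cmp R x y"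
  unfolding subalg_def by (elim conjE) blast

lemma subalg_neg: "subalg S R \<Longrightarrow> x \<in> car S \<Longrightarrow> neg S x = neg R x"
  unfolding subalg_def by (elim conjE) blast

lemma subalg_pl: "subalg S R \<Longrightarrow> x \<in> car S \<Longrightarrow> y \<in> car S \<Longrightarrow> pl S x y = pl R x y"
  unfolding subalg_def by (elim conjE) blast

lemma subalg_leq: "subalg S R \<Longrightarrow> x \<in> car S \<Longrightarrow> y \<in> car S \<Longrightarrow> leq S x y = leq R x y"
  unfolding leq_def by (simp add: subalg_pl)

lemma subalg_mt:
  assumes S: "subalg S R" and x: "x \<in> car S" and y: "y \<in> car S"
  shows "mt S x y = mt R x y"
proof -
  interpret S: relation_algebra S using subalg_relation_algebras[OF S] by blast
  have nx: "neg S x \<in> car S" and ny: "neg S y \<in> car S" using x y by simp_all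
  have "mt S x y = neg R (pl S (neg S x) (neg S y))"
    unfolding mt_def by (rule subalg_neg[OF S S.pl_closed[OF nx ny]])
  also have "\<dots> = neg R (pl R (neg R x) (neg R y))"
    using subalg_pl[OF S nx ny] subalg_neg[OF S x] subalg_neg[OF S y] by simp
  finally show ?thesis unfolding mt_def .
qed

lemma subalg_dvs:
  assumes S: "subalg S R"
  shows "dvs S = dvs R"
proof -
  interpret S: relation_algebra S using subalg_relation_algebras[OF S] by blast
  show ?thesis
    unfolding dvs_def using subalg_neg[OF S S.idt_closed] S unfolding subalg_def by simp
qed

lemma subalg_zero:
  assumes S: "subalg S R"
  shows "zero S = zero R"
proof -
  interpret S: relation_algebra S using subalg_relation_algebras[OF S] by blast
  have "zero S = mt S (idt S) (dvs S)" by (simp add: zero_def dvs_def)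
  also have "\<dots> = mt R (idt S) (dvs S)" using subalg_mt[OF S] by simp
  finally show ?thesis using subalg_dvs[OF S] S by (simp add: zero_def dvs_def subalg_def)
qed

lemma subalg_trans: "subalg E B \<Longrightarrow> subalg B A \<Longrightarrow> subalg E A"
  unfolding subalg_def by (metis subset_trans subsetD)

lemma subalg_atom_leq:
  assumes S: "subalg S R" and d: "atom S d" and u: "u \<in> car S"
    and x: "x \<in> car R" "x \<noteq> zero R" and xd: "leq R x d" and xu: "leq R x u"
  shows "leq R d u"
proof -
  interpret S: relation_algebra S using subalg_relation_algebras[OF S] by blast
  interpret R: relation_algebra R using subalg_relation_algebras[OF S] by blast
  have dS: "d \<in> car S" using d by (rule atom_car)
  have dR: "d \<in> car R" and uR: "u \<in> car R" using subalg_car[OF S] dS u by auto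
  have "leq R x (mt R d u)" using R.mt_greatest dR uR x xd xu by simp
  then have "mt R d u \<noteq> zero R" using R.leq_zero_eq x by auto
  moreover have "mt R d u = zero R \<or> mt R d u = d"
    using S.atom_mt_cases[OF d u] subalg_mt[OF S dS u] subalg_zero[OF S] by simp
  ultimately show ?thesis using R.leq_iff_mt dR uR by simp
qed

lemma subalg_atoms_eq_if_common_lower:
  assumes S: "subalg S R" and "atom S a" "atom S c"
    and "x \<in> car R" "x \<noteq> zero R" "leq R x a" "leq R x c"
  shows "a = c"
proof -
  interpret R: relation_algebra R using subalg_relation_algebras[OF S] by blast
  have "a \<in> car S" "c \<in> car S" using assms(2,3) by (auto intro: atom_car)
  then have "leq R a c" "leq R c a" using subalg_atom_leq[OF S] assms by metis+
  then show ?thesis using R.leq_antisym subalg_car[OF S] \<open>a \<in> car S\<close> \<open>c \<in> car S\<close> by blast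
qed

locale E23_splitting =
  fixes q :: nat and A B :: "('a, 'b) ra_scheme"
  assumes E23: "is_E23 q B" and split: "splitting A B"
begin

lemma subalg_BA: "subalg B A"
  using split unfolding splitting_def by blast

sublocale A: relation_algebra A
  using subalg_relation_algebras[OF subalg_BA] by blast

sublocale B: relation_algebra B
  using subalg_relation_algebras[OF subalg_BA] by blast

lemma car_BA: "u \<in> car B \<Longrightarrow> u \<in> car A"
  using subalg_car[OF subalg_BA] .

lemma covering_atom:
  assumes x: "atom A x" and u: "u \<in> car B" and xu: "leq A x u"
  obtains d where "atom B d" "leq A x d" "leq A d u"
proof -
  obtain d where d: "atom B d" "leq A x d"
    using split x unfolding splitting_def by blast
  then have "leq A d u"
    using subalg_atom_leq[OF subalg_BA d(1) u] atom_car[OF x] atom_nonzero[OF x] xu by blast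
  with d that show ?thesis by blast
qed

lemma covering_diversity_atom:
  assumes x: "atom A x" and u: "u \<in> car B" "leq A x u" "leq A u (dvs A)"
  obtains d where "atom B d" "leq A x d" "leq A d u" "leq A d (dvs A)"
proof -
  obtain d where d: "atom B d" "leq A x d" "leq A d u"
    using covering_atom[OF x u(1,2)] .
  have "d \<in> car A" using car_BA[OF atom_car[OF d(1)]] .
  then have "leq A d (dvs A)" by (rule A.leq_trans[OF _ car_BA[OF u(1)] A.dvs_closed d(3) u(3)])
  with d that show ?thesis by blast
qed

lemma cmp_diversity_atoms:
  assumes "atom B d" "atom B e" "leq A d (dvs A)" "leq A e (dvs A)"
  shows "cmp A d e = (if d = e then neg A d else dvs A)"
proof -
  have de: "d \<in> car B" "e \<in> car B" using assms(1,2) by (auto intro: atom_car)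
  have "leq B u (dvs B) \<longleftrightarrow> leq A u (dvs A)" if "u \<in> car B" for u
    using subalg_leq[OF subalg_BA that B.dvs_closed] subalg_dvs[OF subalg_BA] by simp
  then have "leq B d (dvs B)" "leq B e (dvs B)" using de assms(3,4) by simp_all
  then have "cmp B d e = (if d = e then neg B d else dvs B)"
    using E23 assms unfolding is_E23_def by auto
  moreover have "cmp B d e = cmp A d e" "neg B d = neg A d"
    using subalg_cmp[OF subalg_BA de] subalg_neg[OF subalg_BA de(1)] by simp_all
  ultimately show ?thesis using subalg_dvs[OF subalg_BA] by (cases "d = e") simp_all
qed

lemma cmp_split_atoms:
  assumes x: "atom A x" "leq A x dx" and y: "atom A y" "leq A y dy"
    and dx: "atom B dx" "leq A dx (dvs A)" and dy: "atom B dy" "leq A dy (dvs A)"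
  shows "cmp A x y = (if x \<noteq> cnv A y then mt A (cmp A dx dy) (dvs A) else cmp A dx dy)"
proof -
  have "x \<in> car A" "y \<in> car A" "dx \<in> car A" "dy \<in> car A"
    using x(1) y(1) dx(1) dy(1) car_BA by (auto intro: atom_car)
  then have "leq A x (dvs A)" "leq A y (dvs A)"
    using A.leq_trans[OF _ _ A.dvs_closed] x(2) y(2) dx(2) dy(2) by auto
  moreover have "\<forall>x y cx cy. atom A x \<and> atom A y \<and> leq A x (dvs A) \<and> leq A y (dvs A) \<and>
      atom B cx \<and> atom B cy \<and> leq A x cx \<and> leq A y cy \<longrightarrow>
      cmp A x y = (if x \<noteq> cnv A y then mt A (cmp A cx cy) (dvs A) else cmp A cx cy)"
    using split unfolding splitting_def by (elim conjE)
  ultimately show ?thesis using x y dx dy by blast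
qed

lemma cmp_split_atoms_distinct:
  assumes "atom A x" "leq A x dx" "atom A y" "leq A y dy"
    and "atom B dx" "leq A dx (dvs A)" "atom B dy" "leq A dy (dvs A)" and "dx \<noteq> dy"
  shows "cmp A x y = dvs A"
  using cmp_split_atoms[OF assms(1-8)] cmp_diversity_atoms[OF assms(5,7,6,8)] assms(9)
  by (simp add: A.mt_idem)

lemma cmp_split_atoms_same:
  assumes "atom A x" "leq A x d" "atom A y" "leq A y d" "atom B d" "leq A d (dvs A)"
  shows "leq A (mt A (neg A d) (dvs A)) (cmp A x y)"
proof -
  have dA: "d \<in> car A" using car_BA atom_car[OF assms(5)] .
  have "cmp A d d = neg A d" using cmp_diversity_atoms assms(5,6) by simp
  then have "cmp A x y = mt A (neg A d) (dvs A) \<or> cmp A x y = neg A d"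
    using cmp_split_atoms[OF assms(1-4) assms(5,6) assms(5,6)] by auto
  moreover have "leq A (mt A (neg A d) (dvs A)) (neg A d)" using A.mt_lower1 dA by simp
  ultimately show ?thesis using A.leq_refl dA by auto
qed

lemma special_extension_cycle:
  assumes E: "subalg E B"
    and abc: "atom E a" "atom E b" "atom E c" "\<not> (a = b \<and> b = c)"
    and div: "leq A a (dvs A)" "leq A b (dvs A)" "leq A c (dvs A)"
    and x: "atom A x" "leq A x a" and y: "atom A y" "leq A y b"
  shows "leq A c (cmp A x y)"
proof -
  have EA: "subalg E A" using subalg_trans[OF E subalg_BA] .
  have aB: "a \<in> car B" and bB: "b \<in> car B" and cB: "c \<in> car B"
    using subalg_car[OF E] atom_car abc(1-3) by metis+
  obtain dx where dx: "atom B dx" "leq A x dx" "leq A dx a" "leq A dx (dvs A)"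
    using covering_diversity_atom[OF x(1) aB x(2) div(1)] .
  obtain dy where dy: "atom B dy" "leq A y dy" "leq A dy b" "leq A dy (dvs A)"
    using covering_diversity_atom[OF y(1) bB y(2) div(2)] .
  have cA: "c \<in> car A" using car_BA[OF cB] .
  have dyB: "dy \<in> car B" using atom_car[OF dy(1)] .
  then have dyA: "dy \<in> car A" by (rule car_BA)
  show ?thesis
  proof (cases "dx = dy")
    case False
    then have "cmp A x y = dvs A"
      using cmp_split_atoms_distinct[OF x(1) dx(2) y(1) dy(2) dx(1) dx(4) dy(1) dy(4)] by simp
    with div(3) show ?thesis by simp
  next
    case True
    have "\<not> leq A dy c"
    proof
      assume dyc: "leq A dy c"
      have "dy \<noteq> zero A" using atom_nonzero[OF dy(1)] subalg_zero[OF subalg_BA] by simp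
      then have "a = c" "b = c"
        using subalg_atoms_eq_if_common_lower[OF EA _ abc(3) dyA] abc(1,2) dx(3) dy(3) dyc True
        by blast+
      with abc(4) show False by simp
    qed
    then have "leq B c (neg B dy)"
      using B.atom_leq_or_leq_neg[OF dy(1) cB] subalg_leq[OF subalg_BA dyB cB] by simp
    then have "leq A c (neg A dy)"
      using subalg_leq[OF subalg_BA cB B.neg_closed[OF dyB]] subalg_neg[OF subalg_BA dyB] by simp
    then have "leq A c (mt A (neg A dy) (dvs A))"
      using A.mt_greatest[OF A.neg_closed[OF dyA] A.dvs_closed cA] div(3) by simp
    moreover have "leq A (mt A (neg A dy) (dvs A)) (cmp A x y)"
      using cmp_split_atoms_same[OF x(1) _ y(1) dy(2) dy(1) dy(4)] dx(2) True by simp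
    ultimately show ?thesis
      using A.leq_trans[OF cA A.mt_closed[OF A.neg_closed[OF dyA] A.dvs_closed]]
        atom_car[OF x(1)] atom_car[OF y(1)] by simp
  qed
qed

lemma special_extension_flexible:
  assumes E: "subalg E B" and a: "atom E a" "leq A a (dvs A)" "leq A a (cmp A a a)"
    and x: "atom A x" "leq A x a" and y: "atom A y" "leq A y a"
  shows "mt A (cmp A x y) a \<noteq> zero A"
proof -
  have aB: "a \<in> car B" using subalg_car[OF E atom_car[OF a(1)]] .
  then have aA: "a \<in> car A" by (rule car_BA)
  have a_nz: "a \<noteq> zero A"
    using atom_nonzero[OF a(1)] subalg_zero[OF subalg_trans[OF E subalg_BA]] by simp
  obtain dx where dx: "atom B dx" "leq A x dx" "leq A dx a" "leq A dx (dvs A)"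
    using covering_diversity_atom[OF x(1) aB x(2) a(2)] .
  obtain dy where dy: "atom B dy" "leq A y dy" "leq A dy a" "leq A dy (dvs A)"
    using covering_diversity_atom[OF y(1) aB y(2) a(2)] .
  have dxA: "dx \<in> car A" using car_BA[OF atom_car[OF dx(1)]] .
  have div_a: "mt A (dvs A) a = a"
    using A.leq_iff_mt[OF aA A.dvs_closed] a(2) A.mt_comm[OF aA A.dvs_closed] by simp
  show ?thesis
  proof (cases "dx = dy")
    case False
    then have "cmp A x y = dvs A"
      using cmp_split_atoms_distinct[OF x(1) dx(2) y(1) dy(2) dx(1) dx(4) dy(1) dy(4)] by simp
    with div_a a_nz show ?thesis by simp
  next
    case True
    have "leq A (mt A (neg A dx) (dvs A)) (cmp A x y)"
      using cmp_split_atoms_same[OF x(1) dx(2) y(1) _ dx(1) dx(4)] dy(2) True by simp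
    then have "leq A (mt A (mt A (neg A dx) (dvs A)) a) (mt A (cmp A x y) a)"
      using A.mt_mono_left[OF _ _ aA] dxA atom_car[OF x(1)] atom_car[OF y(1)] by simp
    also have "mt A (mt A (neg A dx) (dvs A)) a = mt A (neg A dx) a"
      using A.mt_assoc[OF A.neg_closed[OF dxA] A.dvs_closed aA] div_a by simp
    finally have mono: "leq A (mt A (neg A dx) a) (mt A (cmp A x y) a)" .
    show ?thesis
    proof
      assume "mt A (cmp A x y) a = zero A"
      with mono have "mt A (neg A dx) a = zero A"
        using A.leq_zero_eq[OF A.mt_closed[OF A.neg_closed[OF dxA] aA]] by simp
      then have "leq A a dx"
        using A.leq_neg_if_mt_zero[OF aA A.neg_closed[OF dxA]] A.neg_neg[OF dxA] by simp
      then have "a = dx" using A.leq_antisym[OF aA dxA _ dx(3)] by simp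
      then have "cmp A a a = neg A a" using cmp_diversity_atoms[OF dx(1) dx(1) dx(4) dx(4)] by simp
      with a(3) show False using A.leq_neg_self_eq_zero[OF aA] a_nz by simp
    qed
  qed
qed

end

theorem lemma1:
  fixes q :: nat and A B E :: "'a ra"
  assumes "4 \<le> q"
    and "is_E23 q B"
    and "is_RA A" and "atomic A" and "symmetric A" and "integral A"
    and "splitting A B"
    and "subalg E B"
  shows "\<forall>a b c. atom E a \<and> atom E b \<and> atom E c \<and>
           leq A a (dvs A) \<and> leq A b (dvs A) \<and> leq A c (dvs A) \<longrightarrow>
           ((\<not> (a = b \<and> b = c) \<and> leq A c (cmp A a b) \<longrightarrow>
               (\<forall>x y. atom A x \<and> atom A y \<and> leq A x a \<and> leq A y b \<longrightarrow>
                  leq A c (cmp A x y))) \<and>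
            (leq A a (cmp A a a) \<longrightarrow>
               (\<forall>x y. atom A x \<and> atom A y \<and> leq A x a \<and> leq A y a \<longrightarrow>
                  mt A (cmp A x y) a \<noteq> zero A)))"
proof -
  interpret E23_splitting q A B using assms(2,7) by unfold_locales
  show ?thesis
    using special_extension_cycle[OF assms(8)] special_extension_flexible[OF assms(8)] by blast
qed

end
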